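(* Let $G=(V,q)$ be a reversible, stochastically complete graph with heat semigroup $P_t$, and let $\widetilde G=(V\times V,\widetilde q)$ be a coupling graph of $G$ with heat semigroup $\widetilde P_t$. Then for all $f\in\ell_\infty(V)$ and $t\ge0$, \[ \widetilde P_t(1\otimes f)=1\otimes P_tf\qquad\text{and}\qquad \widetilde P_t(f\otimes 1)=P_tf\otimes 1. \]
   Context: A graph $G=(V,q)$ consists of a countable set $V$ and a function $q:V\times V\to[0,\infty)$ such that $\#\{y:q(x,y)>0\}<\infty$ for every $x\in V$; its Laplacian is $\Delta f(x)=\sum_y q(x,y)(f(y)-f(x))$. $G$ is reversible if there is $m:V\to(0,\infty)$ with $q(x,y)m(x)=q(y,x)m(y)$. $\ell_\infty(V)$ is the space of bounded real functions. Heat semigroup of any graph: for finite $S\subset V$ let $q_S(x,y)=q(x,y)1_S(x)$ with Laplacian $\Delta_S$, and $P^S_tf:=\sum_{k\ge0}\frac{t^k\Delta_S^k(f1_S)}{k!}$; for $f\in\ell_\infty(V)$, $P_tf:=\lim_{i}P_t^{S_i}f$ pointwise along any increasing exhaustion of $V$ by finite sets $S_i$ (the limit exists and is independent of the exhaustion). $G$ is stochastically complete if $P_t1=1$ for all $t\ge0$. $(f\otimes g)(x,y)=f(x)g(y)$. A graph $\widetilde G=(V\times V,\widetilde q)$ with Laplacian $\widetilde\Delta$ is a coupling graph of $G$ if $\widetilde\Delta(f\otimes 1)=\Delta f\otimes 1$ and $\widetilde\Delta(1\otimes f)=1\otimes\Delta f$ for all $f:V\to\mathbb R$. *)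

theory Defs
  imports "HOL-Analysis.Analysis"
begin

text \<open>A graph on the countable vertex type 'v (V = UNIV): nonnegative weights, finitely many
  out-neighbours.\<close>
definition is_graph :: "('v \<Rightarrow> 'v \<Rightarrow> real) \<Rightarrow> bool" where
  "is_graph q \<longleftrightarrow> (\<forall>x y. 0 \<le> q x y) \<and> (\<forall>x. finite {y. 0 < q x y})"

definition laplacian :: "('v \<Rightarrow> 'v \<Rightarrow> real) \<Rightarrow> ('v \<Rightarrow> real) \<Rightarrow> 'v \<Rightarrow> real" where
  "laplacian q f x = (\<Sum>y\<in>{y. 0 < q x y}. q x y * (f y - f x))"

definition reversible :: "('v \<Rightarrow> 'v \<Rightarrow> real) \<Rightarrow> bool" where
  "reversible q \<longleftrightarrow> (\<exists>m. (\<forall>x. 0 < m x) \<and> (\<forall>x y. q x y * m x = q y x * m y))"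

definition bounded_fun :: "('v \<Rightarrow> real) \<Rightarrow> bool" where
  "bounded_fun f \<longleftrightarrow> (\<exists>C. \<forall>x. \<bar>f x\<bar> \<le> C)"

definition restrict_q :: "('v \<Rightarrow> 'v \<Rightarrow> real) \<Rightarrow> 'v set \<Rightarrow> 'v \<Rightarrow> 'v \<Rightarrow> real" where
  "restrict_q q S x y = q x y * indicator S x"

definition heat_fin :: "('v \<Rightarrow> 'v \<Rightarrow> real) \<Rightarrow> 'v set \<Rightarrow> real \<Rightarrow> ('v \<Rightarrow> real) \<Rightarrow> 'v \<Rightarrow> real" where
  "heat_fin q S t f x =
     (\<Sum>k. t ^ k * ((laplacian (restrict_q q S)) ^^ k) (\<lambda>y. f y * indicator S y) x / fact k)"

definition exhaustion :: "(nat \<Rightarrow> 'v set) \<Rightarrow> bool" where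
  "exhaustion S \<longleftrightarrow> (\<forall>i. finite (S i)) \<and> incseq S \<and> (\<Union>i. S i) = UNIV"

definition heat :: "('v \<Rightarrow> 'v \<Rightarrow> real) \<Rightarrow> real \<Rightarrow> ('v \<Rightarrow> real) \<Rightarrow> 'v \<Rightarrow> real" where
  "heat q t f x = (THE L. \<forall>S. exhaustion S \<longrightarrow> (\<lambda>i. heat_fin q (S i) t f x) \<longlonglongrightarrow> L)"

definition stoch_complete :: "('v \<Rightarrow> 'v \<Rightarrow> real) \<Rightarrow> bool" where
  "stoch_complete q \<longleftrightarrow> (\<forall>t\<ge>0. heat q t (\<lambda>_. 1) = (\<lambda>_. 1))"

definition coupling_graph ::
  "('v \<Rightarrow> 'v \<Rightarrow> real) \<Rightarrow> ('v \<times> 'v \<Rightarrow> 'v \<times> 'v \<Rightarrow> real) \<Rightarrow> bool" where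
  "coupling_graph q qt \<longleftrightarrow> is_graph qt \<and>
     (\<forall>f. laplacian qt (\<lambda>(x, y). f x) = (\<lambda>(x, y). laplacian q f x)) \<and>
     (\<forall>f. laplacian qt (\<lambda>(x, y). f y) = (\<lambda>(x, y). laplacian q f y))"

end

theory Submission
  imports Defs
begin

text \<open>For finite \<open>S\<close> the truncated semigroup \<open>P\<^sup>S\<^sub>t\<close> solves the heat equation on \<open>S\<close> with zero
  boundary values, so a minimum principle for finite cooperative linear systems makes it
  nonnegative, increasing in \<open>S\<close> and bounded by 1; hence \<open>P\<^sub>t f\<close> exists for bounded \<open>f\<close> and is
  linear in \<open>f\<close>. Let \<open>B\<close> be the box of pairs with both coordinates in a finite set \<open>F\<close>. By the
  coupling identities, the truncated coupled semigroup on \<open>B\<close> applied to \<open>1 \<otimes> g\<close> exceeds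
  \<open>1 \<otimes> P\<^sup>F\<^sub>t g + P\<^sup>F\<^sub>t 1 \<otimes> 1 - 1\<close>, because the difference is a supersolution on \<open>B\<close> that is
  nonnegative off \<open>B\<close>. Letting \<open>F\<close> grow and using \<open>P\<^sub>t 1 = 1\<close> bounds the coupled semigroup on
  \<open>1 \<otimes> g\<close> from below by \<open>1 \<otimes> P\<^sub>t g\<close> for \<open>0 \<le> g \<le> 1\<close>; the same bound for \<open>1 - g\<close>, together with
  the coupled semigroup mapping \<open>1\<close> to at most \<open>1\<close>, forces equality.\<close>

lemma first_nonpositive_time:
  fixes f :: "'p \<Rightarrow> real \<Rightarrow> real"
  assumes S: "finite S"
    and cont: "\<And>p s. p \<in> S \<Longrightarrow> 0 \<le> s \<Longrightarrow> s \<le> t \<Longrightarrow> isCont (f p) s"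
    and init: "\<And>p. p \<in> S \<Longrightarrow> 0 < f p 0"
    and hit: "p \<in> S" "0 \<le> s" "s \<le> t" "f p s \<le> 0"
  obtains s0 p0 where "0 < s0" "s0 \<le> t" "p0 \<in> S" "f p0 s0 = 0"
    "\<And>p. p \<in> S \<Longrightarrow> 0 \<le> f p s0"
    "\<And>p s. p \<in> S \<Longrightarrow> 0 \<le> s \<Longrightarrow> s < s0 \<Longrightarrow> 0 < f p s"
proof -
  define Z where "Z = (\<Union>p\<in>S. {s \<in> {0..t}. f p s \<le> 0})"
  have "closed {s \<in> {0..t}. f p s \<le> 0}" if "p \<in> S" for p
    using cont[OF that] by (intro continuous_on_closed_Collect_le continuous_at_imp_continuous_on)
      (auto intro: continuous_intros)
  hence "closed Z" unfolding Z_def using S by blast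
  moreover have "s \<in> Z" using hit unfolding Z_def by auto
  moreover have "bdd_below Z" unfolding Z_def by (auto intro: bdd_belowI[of _ 0])
  ultimately have "Inf Z \<in> Z" by (intro closed_contains_Inf) auto
  then obtain s0 p0 where s0: "s0 = Inf Z" "0 \<le> s0" "s0 \<le> t" and p0: "p0 \<in> S" "f p0 s0 \<le> 0"
    unfolding Z_def by auto
  have before: "0 < f p s" if "p \<in> S" "0 \<le> s" "s < s0" for p s
  proof (rule ccontr)
    assume "\<not> 0 < f p s"
    hence "s \<in> Z" using that s0 unfolding Z_def by (force simp: not_less)
    hence "s0 \<le> s" unfolding s0(1) by (rule cInf_lower) fact
    thus False using that by simp
  qed
  have pos: "0 < s0" using s0 p0 init[OF p0(1)] by (cases "s0 = 0") auto
  have at_s0: "0 \<le> f p s0" if p: "p \<in> S" for p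
  proof (rule tendsto_lowerbound)
    show "(f p \<longlongrightarrow> f p s0) (at_left s0)"
      using cont[OF p s0(2,3)] by (simp add: isCont_def filterlim_at_split)
    show "\<forall>\<^sub>F s in at_left s0. 0 \<le> f p s"
      using eventually_at_left_real[OF pos] by eventually_elim (auto intro: less_imp_le before[OF p])
  qed simp
  show ?thesis
    using that[OF pos s0(3) p0(1) _ at_s0 before] p0 at_s0[OF p0(1)] by simp
qed

lemma cooperative_system_nonneg:
  fixes d d' :: "real \<Rightarrow> 'p \<Rightarrow> real" and a :: "'p \<Rightarrow> 'p \<Rightarrow> real" and b :: "'p \<Rightarrow> real"
  assumes S: "finite S" and t: "0 \<le> t"
    and der: "\<And>p s. p \<in> S \<Longrightarrow> 0 \<le> s \<Longrightarrow> s \<le> t \<Longrightarrow> ((\<lambda>s. d s p) has_real_derivative d' s p) (at s)"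
    and super: "\<And>p s. p \<in> S \<Longrightarrow> 0 \<le> s \<Longrightarrow> s \<le> t \<Longrightarrow> (\<Sum>p'\<in>S. a p p' * d s p') - b p * d s p \<le> d' s p"
    and a_nonneg: "\<And>p p'. 0 \<le> a p p'" and b_nonneg: "\<And>p. 0 \<le> b p"
    and init: "\<And>p. p \<in> S \<Longrightarrow> 0 \<le> d 0 p"
    and p: "p \<in> S"
  shows "0 \<le> d t p"
proof (rule field_le_epsilon)
  define K where "K = 1 + (\<Sum>p\<in>S. \<Sum>p'\<in>S. a p p')"
  have row_sum: "(\<Sum>p'\<in>S. a p p') \<le> K - 1" if "p \<in> S" for p
    unfolding K_def using member_le_sum[OF that _ S, of "\<lambda>p. \<Sum>p'\<in>S. a p p'"]
    by (simp add: a_nonneg sum_nonneg)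
  \<comment> \<open>The barrier \<open>\<epsilon> e\<^sup>K\<^sup>s\<close> grows faster than the coupling terms can push \<open>d\<close> down.\<close>
  have barrier: "0 < d t p + \<epsilon> * exp (K * t)" if \<epsilon>: "0 < \<epsilon>" for \<epsilon>
  proof (rule ccontr)
    define f where "f p s = d s p + \<epsilon> * exp (K * s)" for p s
    have f_der: "((f p) has_real_derivative d' s p + \<epsilon> * (exp (K * s) * K)) (at s)"
      if "p \<in> S" "0 \<le> s" "s \<le> t" for p s
      unfolding f_def using der[OF that] by (auto intro!: derivative_eq_intros)
    have f_cont: "isCont (f p) s" if "p \<in> S" "0 \<le> s" "s \<le> t" for p s
      using f_der[OF that] by (rule DERIV_isCont)
    have f_init: "0 < f p 0" if "p \<in> S" for p using init[OF that] \<epsilon> by (simp add: f_def)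
    assume "\<not> 0 < d t p + \<epsilon> * exp (K * t)"
    hence "f p t \<le> 0" by (simp add: f_def)
    obtain s0 p0 where s0: "0 < s0" "s0 \<le> t" and p0: "p0 \<in> S" "f p0 s0 = 0"
      and at_s0: "\<And>p. p \<in> S \<Longrightarrow> 0 \<le> f p s0"
      and before: "\<And>p s. p \<in> S \<Longrightarrow> 0 \<le> s \<Longrightarrow> s < s0 \<Longrightarrow> 0 < f p s"
      by (rule first_nonpositive_time[where f = f and p = p and s = t, OF S])
        (use f_cont f_init p t \<open>f p t \<le> 0\<close> in auto)
    define E where "E = exp (K * s0)"
    have "0 < E" by (simp add: E_def)
    have d_p0: "d s0 p0 = - \<epsilon> * E" using p0(2) by (simp add: f_def E_def)
    have "- \<epsilon> * E * (K - 1) \<le> - \<epsilon> * E * (\<Sum>p'\<in>S. a p0 p')"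
      using row_sum[OF p0(1)] \<epsilon> \<open>0 < E\<close> by (intro mult_left_mono_neg) auto
    also have "\<dots> = (\<Sum>p'\<in>S. a p0 p' * (- \<epsilon> * E))"
      by (simp add: sum_distrib_left mult.commute)
    also have "\<dots> \<le> (\<Sum>p'\<in>S. a p0 p' * d s0 p')"
      using at_s0 by (intro sum_mono mult_left_mono a_nonneg) (fastforce simp: f_def E_def)
    also have "\<dots> \<le> (\<Sum>p'\<in>S. a p0 p' * d s0 p') - b p0 * d s0 p0"
      using d_p0 b_nonneg[of p0] \<epsilon> \<open>0 < E\<close> by simp
    also have "\<dots> \<le> d' s0 p0" using super[OF p0(1)] s0 by simp
    finally have "0 < d' s0 p0 + \<epsilon> * (E * K)"
      using mult_pos_pos[OF \<epsilon> \<open>0 < E\<close>] by (simp add: algebra_simps)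
    from DERIV_pos_inc_left[OF f_der[OF p0(1) _ s0(2)] this[unfolded E_def]] s0
    obtain \<delta> where "0 < \<delta>" "\<And>h. 0 < h \<Longrightarrow> h < \<delta> \<Longrightarrow> f p0 (s0 - h) < f p0 s0" by auto
    hence "f p0 (s0 - min \<delta> s0 / 2) < 0" using s0 p0 by simp
    moreover have "0 < f p0 (s0 - min \<delta> s0 / 2)" using s0 \<open>0 < \<delta>\<close> by (intro before[OF p0(1)]) auto
    ultimately show False by simp
  qed
  fix e :: real assume "0 < e"
  thus "0 \<le> d t p + e" using barrier[of "e / exp (K * t)"] by simp
qed

definition vertex_degree :: "('v \<Rightarrow> 'v \<Rightarrow> real) \<Rightarrow> 'v \<Rightarrow> real" where
  "vertex_degree q x = (\<Sum>y\<in>{y. 0 < q x y}. q x y)"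

lemma vertex_degree_nonneg: "0 \<le> vertex_degree q x"
  unfolding vertex_degree_def by (rule sum_nonneg) simp

lemma laplacian_eq_sum_minus_degree:
  "laplacian q h x = (\<Sum>y\<in>{y. 0 < q x y}. q x y * h y) - vertex_degree q x * h x"
  by (simp add: laplacian_def vertex_degree_def algebra_simps sum_subtractf sum_distrib_left)

lemma laplacian_restrict_q: "laplacian (restrict_q q S) h x = indicator S x * laplacian q h x"
  by (cases "x \<in> S") (simp_all add: laplacian_def restrict_q_def)

lemma laplacian_lincomb:
  "laplacian q (\<lambda>y. a * f y + b * g y) x = a * laplacian q f x + b * laplacian q g x"
  unfolding laplacian_def sum_distrib_left sum.distrib[symmetric]
  by (intro sum.cong refl) (simp add: algebra_simps)

lemma laplacian_add: "laplacian q (\<lambda>y. f y + g y) x = laplacian q f x + laplacian q g x"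
  using laplacian_lincomb[of q 1 f 1 g x] by simp

lemma laplacian_diff: "laplacian q (\<lambda>y. f y - g y) x = laplacian q f x - laplacian q g x"
  using laplacian_lincomb[of q 1 f "-1" g x] by simp

lemma laplacian_const: "laplacian q (\<lambda>y. c) x = 0"
  by (simp add: laplacian_def)

lemma heat_supersolution_nonneg:
  fixes d d' :: "real \<Rightarrow> 'p \<Rightarrow> real"
  assumes G: "is_graph q" and S: "finite S" and t: "0 \<le> t"
    and der: "\<And>p s. p \<in> S \<Longrightarrow> 0 \<le> s \<Longrightarrow> s \<le> t \<Longrightarrow> ((\<lambda>s. d s p) has_real_derivative d' s p) (at s)"
    and super: "\<And>p s. p \<in> S \<Longrightarrow> 0 \<le> s \<Longrightarrow> s \<le> t \<Longrightarrow> laplacian q (d s) p \<le> d' s p"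
    and outside: "\<And>p s. p \<notin> S \<Longrightarrow> 0 \<le> s \<Longrightarrow> s \<le> t \<Longrightarrow> 0 \<le> d s p"
    and init: "\<And>p. p \<in> S \<Longrightarrow> 0 \<le> d 0 p"
    and p: "p \<in> S"
  shows "0 \<le> d t p"
proof (rule cooperative_system_nonneg[OF S t der _ _ vertex_degree_nonneg init p, where a = q])
  show q_nonneg: "0 \<le> q p p'" for p p' using G by (simp add: is_graph_def)
  fix p s assume p: "p \<in> S" and s: "0 \<le> s" "s \<le> t"
  let ?N = "{y. 0 < q p y}"
  have "finite ?N" using G by (simp add: is_graph_def)
  have "(\<Sum>p'\<in>S. q p p' * d s p') = (\<Sum>p'\<in>?N \<inter> S. q p p' * d s p')"
    using S q_nonneg by (intro sum.mono_neutral_right) (auto simp: order.strict_iff_order)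
  also have "\<dots> \<le> (\<Sum>p'\<in>?N \<inter> S. q p p' * d s p') + (\<Sum>p'\<in>?N - S. q p p' * d s p')"
    using outside s by (auto intro!: sum_nonneg mult_nonneg_nonneg q_nonneg)
  also have "\<dots> = (\<Sum>p'\<in>?N. q p p' * d s p')"
    using \<open>finite ?N\<close> by (metis sum.Int_Diff)
  finally show "(\<Sum>p'\<in>S. q p p' * d s p') - vertex_degree q p * d s p \<le> d' s p"
    using super[OF p s] unfolding laplacian_eq_sum_minus_degree by linarith
qed

definition heat_fin_coeff ::
  "('v \<Rightarrow> 'v \<Rightarrow> real) \<Rightarrow> 'v set \<Rightarrow> ('v \<Rightarrow> real) \<Rightarrow> nat \<Rightarrow> 'v \<Rightarrow> real" where
  "heat_fin_coeff q S g k = (laplacian (restrict_q q S) ^^ k) (\<lambda>y. g y * indicator S y)"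

lemma heat_fin_eq_power_series:
  "heat_fin q S t g x = (\<Sum>k. heat_fin_coeff q S g k x / fact k * t ^ k)"
  by (simp add: heat_fin_def heat_fin_coeff_def mult.commute mult.left_commute)

lemma heat_fin_coeff_Suc:
  "heat_fin_coeff q S g (Suc k) = laplacian (restrict_q q S) (heat_fin_coeff q S g k)"
  by (simp add: heat_fin_coeff_def)

lemma heat_fin_coeff_outside: "x \<notin> S \<Longrightarrow> heat_fin_coeff q S g k x = 0"
  by (cases k) (simp_all add: heat_fin_coeff_def laplacian_restrict_q)

lemma heat_fin_coeff_lincomb:
  "heat_fin_coeff q S (\<lambda>y. a * f y + b * g y) k x
     = a * heat_fin_coeff q S f k x + b * heat_fin_coeff q S g k x"
proof (induction k arbitrary: x)
  case 0 show ?case by (simp add: heat_fin_coeff_def algebra_simps)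
next
  case (Suc k)
  have "heat_fin_coeff q S (\<lambda>y. a * f y + b * g y) k
      = (\<lambda>y. a * heat_fin_coeff q S f k y + b * heat_fin_coeff q S g k y)"
    using Suc.IH by blast
  thus ?case by (simp add: heat_fin_coeff_Suc laplacian_lincomb)
qed

lemma abs_le_sum_abs_support:
  fixes h :: "'a \<Rightarrow> real"
  assumes "finite S" "\<And>y. y \<notin> S \<Longrightarrow> h y = 0"
  shows "\<bar>h x\<bar> \<le> (\<Sum>z\<in>S. \<bar>h z\<bar>)"
  using assms member_le_sum[of x S "\<lambda>z. \<bar>h z\<bar>"] by (cases "x \<in> S") (auto simp: sum_nonneg)

lemma laplacian_abs_le:
  assumes G: "is_graph q" and S: "finite S" and h: "\<And>y. y \<notin> S \<Longrightarrow> h y = 0"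
  shows "\<bar>laplacian q h x\<bar> \<le> 2 * vertex_degree q x * (\<Sum>z\<in>S. \<bar>h z\<bar>)"
proof -
  let ?M = "\<Sum>z\<in>S. \<bar>h z\<bar>"
  have h_le: "\<bar>h z\<bar> \<le> ?M" for z using S h by (rule abs_le_sum_abs_support)
  have "\<bar>laplacian q h x\<bar> \<le> (\<Sum>y\<in>{y. 0 < q x y}. \<bar>q x y * (h y - h x)\<bar>)"
    unfolding laplacian_def by (rule sum_abs)
  also have "\<dots> \<le> (\<Sum>y\<in>{y. 0 < q x y}. q x y * (2 * ?M))"
  proof (rule sum_mono)
    fix y assume "y \<in> {y. 0 < q x y}"
    moreover have "\<bar>h y - h x\<bar> \<le> 2 * ?M"
      using h_le[of x] h_le[of y] by linarith
    ultimately show "\<bar>q x y * (h y - h x)\<bar> \<le> q x y * (2 * ?M)"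
      by (simp add: abs_mult mult_left_mono)
  qed
  also have "\<dots> = 2 * vertex_degree q x * ?M"
    by (simp add: vertex_degree_def sum_distrib_right[symmetric])
  finally show ?thesis .
qed

lemma heat_fin_coeff_sum_abs_le:
  assumes G: "is_graph q" and S: "finite S"
  shows "(\<Sum>z\<in>S. \<bar>heat_fin_coeff q S g k z\<bar>)
           \<le> (2 * (\<Sum>z\<in>S. vertex_degree q z)) ^ k * (\<Sum>z\<in>S. \<bar>g z\<bar>)"
proof (induction k)
  case 0 show ?case by (simp add: heat_fin_coeff_def)
next
  case (Suc k)
  let ?C = "2 * (\<Sum>z\<in>S. vertex_degree q z)" and ?M = "\<Sum>z\<in>S. \<bar>heat_fin_coeff q S g k z\<bar>"
  have "(\<Sum>z\<in>S. \<bar>heat_fin_coeff q S g (Suc k) z\<bar>) = (\<Sum>z\<in>S. \<bar>laplacian q (heat_fin_coeff q S g k) z\<bar>)"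
    by (simp add: heat_fin_coeff_Suc laplacian_restrict_q)
  also have "\<dots> \<le> (\<Sum>z\<in>S. 2 * vertex_degree q z * ?M)"
    by (intro sum_mono laplacian_abs_le[OF G S]) (simp add: heat_fin_coeff_outside)
  also have "\<dots> = ?C * ?M"
    by (simp add: sum_distrib_right[symmetric] sum_distrib_left[symmetric])
  also have "\<dots> \<le> ?C * (?C ^ k * (\<Sum>z\<in>S. \<bar>g z\<bar>))"
    by (intro mult_left_mono Suc.IH) (simp add: sum_nonneg vertex_degree_nonneg)
  finally show ?case by simp
qed

lemma summable_heat_fin_coeff:
  assumes G: "is_graph q" and S: "finite S"
  shows "summable (\<lambda>k. heat_fin_coeff q S g k x / fact k * t ^ k)"
proof (rule summable_comparison_test)
  let ?C = "2 * (\<Sum>z\<in>S. vertex_degree q z)" and ?M = "\<Sum>z\<in>S. \<bar>g z\<bar>"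
  have coeff_le: "\<bar>heat_fin_coeff q S g k x\<bar> \<le> ?C ^ k * ?M" for k
    using abs_le_sum_abs_support[OF S heat_fin_coeff_outside] heat_fin_coeff_sum_abs_le[OF G S]
    by (rule order_trans)
  show "summable (\<lambda>k. ?M * (inverse (fact k) * (?C * \<bar>t\<bar>) ^ k))"
    by (intro summable_mult summable_exp)
  show "\<exists>N. \<forall>k\<ge>N. norm (heat_fin_coeff q S g k x / fact k * t ^ k) \<le> ?M * (inverse (fact k) * (?C * \<bar>t\<bar>) ^ k)"
  proof (intro exI allI impI)
    fix k :: nat
    have "norm (heat_fin_coeff q S g k x / fact k * t ^ k) = \<bar>heat_fin_coeff q S g k x\<bar> * \<bar>t\<bar> ^ k / fact k"
      by (simp add: abs_mult power_abs)
    also have "\<dots> \<le> ?C ^ k * ?M * \<bar>t\<bar> ^ k / fact k"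
      by (intro divide_right_mono mult_right_mono coeff_le) auto
    also have "\<dots> = ?M * (inverse (fact k) * (?C * \<bar>t\<bar>) ^ k)"
      by (simp add: power_mult_distrib field_simps)
    finally show "norm (heat_fin_coeff q S g k x / fact k * t ^ k) \<le> ?M * (inverse (fact k) * (?C * \<bar>t\<bar>) ^ k)" .
  qed
qed

lemma heat_fin_outside: "x \<notin> S \<Longrightarrow> heat_fin q S t g x = 0"
  by (simp add: heat_fin_eq_power_series heat_fin_coeff_outside)

lemma heat_fin_at_0: "heat_fin q S 0 g x = g x * indicator S x"
proof -
  have "(\<lambda>k. heat_fin_coeff q S g k x / fact k * 0 ^ k) = (\<lambda>k. if k = 0 then g x * indicator S x else 0)"
    by (auto simp: heat_fin_coeff_def)
  thus ?thesis unfolding heat_fin_eq_power_series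
    using sums_single[of 0 "\<lambda>_. g x * indicator S x"] by (simp add: sums_iff)
qed

lemma heat_fin_lincomb:
  assumes G: "is_graph q" and S: "finite S"
  shows "heat_fin q S t (\<lambda>y. a * f y + b * g y) x = a * heat_fin q S t f x + b * heat_fin q S t g x"
proof -
  let ?u = "\<lambda>h k. heat_fin_coeff q S h k x / fact k * t ^ k"
  have "(\<lambda>k. ?u (\<lambda>y. a * f y + b * g y) k) = (\<lambda>k. a * ?u f k + b * ?u g k)"
    by (simp add: heat_fin_coeff_lincomb add_divide_distrib algebra_simps)
  moreover have "(\<Sum>k. a * ?u f k + b * ?u g k) = a * (\<Sum>k. ?u f k) + b * (\<Sum>k. ?u g k)"
  proof -
    have "summable (?u f)" "summable (?u g)" by (intro summable_heat_fin_coeff[OF G S])+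
    hence "(\<Sum>k. a * ?u f k + b * ?u g k) = (\<Sum>k. a * ?u f k) + (\<Sum>k. b * ?u g k)"
      by (intro suminf_add[symmetric] summable_mult)
    also have "\<dots> = a * (\<Sum>k. ?u f k) + b * (\<Sum>k. ?u g k)"
      by (simp only: suminf_mult[OF \<open>summable (?u f)\<close>] suminf_mult[OF \<open>summable (?u g)\<close>])
    finally show ?thesis .
  qed
  ultimately show ?thesis by (simp add: heat_fin_eq_power_series)
qed

lemma heat_fin_has_real_derivative:
  assumes G: "is_graph q" and S: "finite S" and x: "x \<in> S"
  shows "((\<lambda>s. heat_fin q S s g x) has_real_derivative laplacian q (\<lambda>y. heat_fin q S s g y) x) (at s)"
proof -
  let ?c = "\<lambda>y k. heat_fin_coeff q S g k y / fact k"
  let ?N = "{y. 0 < q x y}"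
  have summable: "summable (\<lambda>k. ?c y k * r ^ k)" for y r by (rule summable_heat_fin_coeff[OF G S])
  have diffs_c: "diffs (?c x) k = heat_fin_coeff q S g (Suc k) x / fact k" for k
    by (simp add: diffs_def fact_Suc field_simps del: of_nat_Suc)
  have term_eq: "diffs (?c x) k * s ^ k = (\<Sum>y\<in>?N. q x y * (?c y k * s ^ k) - q x y * (?c x k * s ^ k))" for k
  proof -
    have "diffs (?c x) k * s ^ k
        = (\<Sum>y\<in>?N. q x y * (heat_fin_coeff q S g k y - heat_fin_coeff q S g k x)) / fact k * s ^ k"
      unfolding diffs_c heat_fin_coeff_Suc laplacian_restrict_q using x by (simp add: laplacian_def)
    also have "\<dots> = (\<Sum>y\<in>?N. q x y * (heat_fin_coeff q S g k y - heat_fin_coeff q S g k x) / fact k * s ^ k)"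
      by (simp add: sum_divide_distrib sum_distrib_right)
    finally show ?thesis by (simp add: field_simps)
  qed
  have "(\<Sum>k. diffs (?c x) k * s ^ k)
      = (\<Sum>k. \<Sum>y\<in>?N. q x y * (?c y k * s ^ k) - q x y * (?c x k * s ^ k))"
    by (simp only: term_eq)
  also have "\<dots> = (\<Sum>y\<in>?N. \<Sum>k. q x y * (?c y k * s ^ k) - q x y * (?c x k * s ^ k))"
    by (rule suminf_sum) (intro summable_diff summable_mult summable)
  also have "\<dots> = (\<Sum>y\<in>?N. q x y * (heat_fin q S s g y - heat_fin q S s g x))"
  proof (rule sum.cong[OF refl])
    fix y
    have "(\<Sum>k. q x y * (?c y k * s ^ k) - q x y * (?c x k * s ^ k))
        = (\<Sum>k. q x y * (?c y k * s ^ k)) - (\<Sum>k. q x y * (?c x k * s ^ k))"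
      by (intro suminf_diff[symmetric] summable_mult summable)
    thus "(\<Sum>k. q x y * (?c y k * s ^ k) - q x y * (?c x k * s ^ k))
        = q x y * (heat_fin q S s g y - heat_fin q S s g x)"
      by (simp only: suminf_mult[OF summable] heat_fin_eq_power_series right_diff_distrib)
  qed
  also have "\<dots> = laplacian q (\<lambda>y. heat_fin q S s g y) x"
    by (simp add: laplacian_def)
  finally show ?thesis
    using termdiffs_strong_converges_everywhere[OF summable[of x], of s]
    by (simp add: heat_fin_eq_power_series)
qed

lemma heat_fin_nonneg:
  assumes G: "is_graph q" and S: "finite S" and t: "0 \<le> t" and g: "\<And>y. 0 \<le> g y"
  shows "0 \<le> heat_fin q S t g x"
proof (cases "x \<in> S")
  case True
  show ?thesis
    by (rule heat_supersolution_nonneg[OF G S t, where d = "\<lambda>s y. heat_fin q S s g y"])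
      (auto simp: heat_fin_has_real_derivative[OF G S] heat_fin_outside heat_fin_at_0 g True)
qed (simp add: heat_fin_outside)

lemma heat_fin_mono_set:
  assumes G: "is_graph q" and S': "finite S'" and sub: "S \<subseteq> S'" and t: "0 \<le> t"
    and g: "\<And>y. 0 \<le> g y"
  shows "heat_fin q S t g x \<le> heat_fin q S' t g x"
proof (cases "x \<in> S")
  case True
  have S: "finite S" using S' sub by (rule rev_finite_subset)
  have "0 \<le> heat_fin q S' t g x - heat_fin q S t g x"
  proof (rule heat_supersolution_nonneg[OF G S t, where d = "\<lambda>s y. heat_fin q S' s g y - heat_fin q S s g y"])
    show "((\<lambda>s. heat_fin q S' s g p - heat_fin q S s g p) has_real_derivative
        laplacian q (\<lambda>y. heat_fin q S' s g y - heat_fin q S s g y) p) (at s)" if "p \<in> S" for p s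
      unfolding laplacian_diff using that sub
      by (intro DERIV_diff heat_fin_has_real_derivative[OF G S'] heat_fin_has_real_derivative[OF G S]) auto
  qed (use True sub in \<open>auto simp: heat_fin_outside heat_fin_at_0 heat_fin_nonneg[OF G S' _ g]\<close>)
  thus ?thesis by simp
qed (simp add: heat_fin_outside heat_fin_nonneg[OF G S' t g])

lemma heat_fin_le_1:
  assumes G: "is_graph q" and S: "finite S" and t: "0 \<le> t" and g: "\<And>y. g y \<le> 1"
  shows "heat_fin q S t g x \<le> 1"
proof (cases "x \<in> S")
  case True
  have "0 \<le> 1 - heat_fin q S t g x"
  proof (rule heat_supersolution_nonneg[OF G S t, where d = "\<lambda>s y. 1 - heat_fin q S s g y"])
    show "((\<lambda>s. 1 - heat_fin q S s g p) has_real_derivative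
        laplacian q (\<lambda>y. 1 - heat_fin q S s g y) p) (at s)" if "p \<in> S" for p s
      using DERIV_diff[OF DERIV_const[of 1] heat_fin_has_real_derivative[OF G S that]]
      by (simp add: laplacian_diff laplacian_const)
  qed (use True in \<open>auto simp: heat_fin_outside heat_fin_at_0 g\<close>)
  thus ?thesis by simp
qed (simp add: heat_fin_outside)

lemma exhaustion_exists: "\<exists>E :: nat \<Rightarrow> 'v::countable set. exhaustion E"
proof
  show "exhaustion (\<lambda>i. {x :: 'v. to_nat x \<le> i})"
    unfolding exhaustion_def incseq_def
    by (auto intro: finite_vimageI[of "{..i}" to_nat for i, unfolded vimage_def atMost_iff])
qed

lemma exhaustion_covers_finite:
  assumes S: "exhaustion S" and F: "finite F"
  shows "\<exists>i. F \<subseteq> S i"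
  using F
proof (induction F rule: finite_induct)
  case (insert x F)
  then obtain i where "F \<subseteq> S i" by blast
  moreover obtain j where "x \<in> S j" using S unfolding exhaustion_def by blast
  moreover have "S i \<subseteq> S (max i j)" "S j \<subseteq> S (max i j)"
    using S by (auto simp: exhaustion_def incseq_def)
  ultimately show ?case by blast
qed simp

lemma exhaustion_Un_finite:
  "exhaustion S \<Longrightarrow> finite A \<Longrightarrow> exhaustion (\<lambda>i. S i \<union> A)"
  by (auto simp: exhaustion_def incseq_def)

lemma heat_eqI:
  fixes q :: "'v::countable \<Rightarrow> 'v \<Rightarrow> real"
  assumes "\<And>S. exhaustion S \<Longrightarrow> (\<lambda>i. heat_fin q (S i) t f x) \<longlonglongrightarrow> L"
  shows "heat q t f x = L"
  unfolding heat_def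
proof (rule the_equality)
  show "\<forall>S. exhaustion S \<longrightarrow> (\<lambda>i. heat_fin q (S i) t f x) \<longlonglongrightarrow> L" using assms by blast
  fix L' assume "\<forall>S. exhaustion S \<longrightarrow> (\<lambda>i. heat_fin q (S i) t f x) \<longlonglongrightarrow> L'"
  moreover obtain E :: "nat \<Rightarrow> 'v set" where "exhaustion E" using exhaustion_exists by blast
  ultimately show "L' = L" using assms LIMSEQ_unique by blast
qed

lemma incseq_heat_fin:
  assumes G: "is_graph q" and S: "exhaustion S" and t: "0 \<le> t" and g: "\<And>y. 0 \<le> g y"
  shows "incseq (\<lambda>i. heat_fin q (S i) t g x)"
  using S unfolding incseq_def exhaustion_def by (auto intro!: heat_fin_mono_set[OF G _ _ t g])

lemma tendsto_heat_fin_unit: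
  fixes q :: "'v::countable \<Rightarrow> 'v \<Rightarrow> real"
  assumes G: "is_graph q" and t: "0 \<le> t" and g: "\<And>y. 0 \<le> g y" "\<And>y. g y \<le> 1"
    and S: "exhaustion S"
  shows "(\<lambda>i. heat_fin q (S i) t g x) \<longlonglongrightarrow> heat q t g x"
proof -
  \<comment> \<open>Monotone in the exhausting set and bounded by 1, so each sequence converges; the limits
    along two exhaustions bound each other because each set of one lies in a set of the other.\<close>
  have conv: "(\<lambda>i. heat_fin q (T i) t g x) \<longlonglongrightarrow> (SUP i. heat_fin q (T i) t g x)"
    if T: "exhaustion T" for T
  proof (rule LIMSEQ_incseq_SUP[OF _ incseq_heat_fin[OF G T t g(1)]])
    show "bdd_above (range (\<lambda>i. heat_fin q (T i) t g x))"
      using T by (intro bdd_aboveI2[where M = 1] heat_fin_le_1[OF G _ t g(2)]) (simp add: exhaustion_def)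
  qed
  have le: "(SUP i. heat_fin q (T i) t g x) \<le> (SUP i. heat_fin q (T' i) t g x)"
    if T: "exhaustion T" and T': "exhaustion T'" for T T'
  proof (rule cSUP_least)
    fix i
    obtain j where "T i \<subseteq> T' j"
      using exhaustion_covers_finite[OF T'] T unfolding exhaustion_def by blast
    hence "heat_fin q (T i) t g x \<le> heat_fin q (T' j) t g x"
      using T' by (intro heat_fin_mono_set[OF G _ _ t g(1)]) (auto simp: exhaustion_def)
    also have "\<dots> \<le> (SUP i. heat_fin q (T' i) t g x)"
      by (rule incseq_le[OF incseq_heat_fin[OF G T' t g(1)] conv[OF T']])
    finally show "heat_fin q (T i) t g x \<le> (SUP i. heat_fin q (T' i) t g x)" .
  qed simp
  have "heat q t g x = (SUP i. heat_fin q (S i) t g x)"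
    using conv le[OF _ S] le[OF S] by (intro heat_eqI) (metis order_antisym)
  thus ?thesis using conv[OF S] by simp
qed

lemma bounded_fun_unit_rescale:
  assumes "bounded_fun f"
  obtains g a b where "\<And>y. 0 \<le> g y" "\<And>y. g y \<le> 1" "f = (\<lambda>y. a * g y + b * 1)"
proof -
  obtain C where C: "\<And>y. \<bar>f y\<bar> \<le> C" using assms by (auto simp: bounded_fun_def)
  define D where "D = C + 1"
  have "0 < D" using C[of undefined] by (simp add: D_def)
  show ?thesis
  proof (rule that[of "\<lambda>y. (f y + D) / (2 * D)" "2 * D" "- D"])
    show "0 \<le> (f y + D) / (2 * D)" "(f y + D) / (2 * D) \<le> 1" for y
      using C[of y] \<open>0 < D\<close> by (auto simp: D_def abs_le_iff)
  qed (use \<open>0 < D\<close> in auto)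
qed

lemma bounded_fun_unit: "(\<And>y. 0 \<le> g y) \<Longrightarrow> (\<And>y. g y \<le> 1) \<Longrightarrow> bounded_fun g"
  unfolding bounded_fun_def by (metis abs_of_nonneg)

lemma tendsto_heat_fin:
  fixes q :: "'v::countable \<Rightarrow> 'v \<Rightarrow> real"
  assumes G: "is_graph q" and t: "0 \<le> t" and f: "bounded_fun f" and S: "exhaustion S"
  shows "(\<lambda>i. heat_fin q (S i) t f x) \<longlonglongrightarrow> heat q t f x"
proof -
  obtain g a b where g: "\<And>y. 0 \<le> g y" "\<And>y. g y \<le> 1" and f_eq: "f = (\<lambda>y. a * g y + b * 1)"
    using bounded_fun_unit_rescale[OF f] by blast
  have lim: "(\<lambda>i. heat_fin q (T i) t f x) \<longlonglongrightarrow> a * heat q t g x + b * heat q t (\<lambda>_. 1) x"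
    if T: "exhaustion T" for T
  proof -
    have "heat_fin q (T i) t f x = a * heat_fin q (T i) t g x + b * heat_fin q (T i) t (\<lambda>_. 1) x" for i
      using T unfolding f_eq by (intro heat_fin_lincomb[OF G]) (simp add: exhaustion_def)
    thus ?thesis by (simp only:) (intro tendsto_intros tendsto_heat_fin_unit[OF G t _ _ T] g; simp)
  qed
  have "heat q t f x = a * heat q t g x + b * heat q t (\<lambda>_. 1) x" by (rule heat_eqI) (rule lim)
  thus ?thesis using lim[OF S] by simp
qed

lemma heat_lincomb:
  fixes q :: "'v::countable \<Rightarrow> 'v \<Rightarrow> real"
  assumes G: "is_graph q" and t: "0 \<le> t" and f: "bounded_fun f" and g: "bounded_fun g"
  shows "heat q t (\<lambda>y. a * f y + b * g y) x = a * heat q t f x + b * heat q t g x"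
proof (rule heat_eqI)
  fix S :: "nat \<Rightarrow> 'v set" assume S: "exhaustion S"
  have "heat_fin q (S i) t (\<lambda>y. a * f y + b * g y) x = a * heat_fin q (S i) t f x + b * heat_fin q (S i) t g x" for i
    using S by (intro heat_fin_lincomb[OF G]) (simp add: exhaustion_def)
  thus "(\<lambda>i. heat_fin q (S i) t (\<lambda>y. a * f y + b * g y) x) \<longlonglongrightarrow> a * heat q t f x + b * heat q t g x"
    by (simp only:) (intro tendsto_intros tendsto_heat_fin[OF G t _ S] f g)
qed

lemma heat_fin_le_heat:
  fixes q :: "'v::countable \<Rightarrow> 'v \<Rightarrow> real"
  assumes G: "is_graph q" and F: "finite F" and t: "0 \<le> t" and g: "\<And>y. 0 \<le> g y" "\<And>y. g y \<le> 1"
  shows "heat_fin q F t g x \<le> heat q t g x"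
proof -
  obtain E :: "nat \<Rightarrow> 'v set" where E: "exhaustion E" using exhaustion_exists by blast
  obtain j where "F \<subseteq> E j" using exhaustion_covers_finite[OF E F] ..
  hence "heat_fin q F t g x \<le> heat_fin q (E j) t g x"
    using E by (intro heat_fin_mono_set[OF G _ _ t g(1)]) (auto simp: exhaustion_def)
  also have "\<dots> \<le> heat q t g x"
    by (rule incseq_le[OF incseq_heat_fin[OF G E t g(1)] tendsto_heat_fin_unit[OF G t g E]])
  finally show ?thesis .
qed

lemma heat_le_1:
  fixes q :: "'v::countable \<Rightarrow> 'v \<Rightarrow> real"
  assumes G: "is_graph q" and t: "0 \<le> t" and g: "\<And>y. 0 \<le> g y" "\<And>y. g y \<le> 1"
  shows "heat q t g x \<le> 1"
proof -
  obtain E :: "nat \<Rightarrow> 'v set" where E: "exhaustion E" using exhaustion_exists by blast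
  show ?thesis
    using E by (intro LIMSEQ_le_const2[OF tendsto_heat_fin_unit[OF G t g E]] exI[of _ 0] allI impI
        heat_fin_le_1[OF G _ t g(2)]) (simp add: exhaustion_def)
qed

definition coupling_projections ::
  "('v \<Rightarrow> 'v \<Rightarrow> real) \<Rightarrow> ('p \<Rightarrow> 'p \<Rightarrow> real) \<Rightarrow> ('p \<Rightarrow> 'v) \<Rightarrow> ('p \<Rightarrow> 'v) \<Rightarrow> bool" where
  "coupling_projections q qt \<pi>1 \<pi>2 \<longleftrightarrow> is_graph qt \<and> inj (\<lambda>p. (\<pi>1 p, \<pi>2 p)) \<and>
     (\<forall>h. laplacian qt (\<lambda>p. h (\<pi>1 p)) = (\<lambda>p. laplacian q h (\<pi>1 p))) \<and>
     (\<forall>h. laplacian qt (\<lambda>p. h (\<pi>2 p)) = (\<lambda>p. laplacian q h (\<pi>2 p)))"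

lemma coupling_graph_projections:
  assumes "coupling_graph q qt"
  shows "coupling_projections q qt fst snd" and "coupling_projections q qt snd fst"
  using assms by (auto simp: coupling_graph_def coupling_projections_def case_prod_beta' inj_on_def)

lemma heat_fin_coupling_lower_bound:
  assumes C: "coupling_projections q qt \<pi>1 \<pi>2" and G: "is_graph q"
    and F: "finite F" and box: "finite B" "B = {p. \<pi>1 p \<in> F \<and> \<pi>2 p \<in> F}" and p: "p \<in> B"
    and t: "0 \<le> t" and g: "\<And>y. 0 \<le> g y" "\<And>y. g y \<le> 1"
  shows "heat_fin q F t g (\<pi>2 p) + heat_fin q F t (\<lambda>_. 1) (\<pi>1 p) - 1 \<le> heat_fin qt B t (\<lambda>p. g (\<pi>2 p)) p"
proof -
  have Gt: "is_graph qt" and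
    lap1: "\<And>h. laplacian qt (\<lambda>p. h (\<pi>1 p)) = (\<lambda>p. laplacian q h (\<pi>1 p))" and
    lap2: "\<And>h. laplacian qt (\<lambda>p. h (\<pi>2 p)) = (\<lambda>p. laplacian q h (\<pi>2 p))"
    using C by (auto simp: coupling_projections_def)
  let ?v = "\<lambda>s p. heat_fin qt B s (\<lambda>p. g (\<pi>2 p)) p"
  let ?h = "\<lambda>s. heat_fin q F s g" and ?k = "\<lambda>s. heat_fin q F s (\<lambda>_. 1)"
  define d where "d s p = ?v s p - (?h s (\<pi>2 p) + ?k s (\<pi>1 p) - 1)" for s p
  \<comment> \<open>By the coupling identities \<open>d\<close> solves the heat equation of \<open>qt\<close> on the box \<open>B\<close>;
    off the box one of the terms \<open>?h\<close>, \<open>?k\<close> vanishes and the other is at most 1.\<close>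
  have "0 \<le> d t p"
  proof (rule heat_supersolution_nonneg[OF Gt box(1) t, where d = d])
    fix p s assume "p \<in> B"
    hence "\<pi>1 p \<in> F" "\<pi>2 p \<in> F" using box(2) by auto
    have "laplacian qt (d s) p
        = laplacian qt (?v s) p - (laplacian q (?h s) (\<pi>2 p) + laplacian q (?k s) (\<pi>1 p))"
      unfolding d_def laplacian_diff laplacian_add laplacian_const lap1 lap2 by simp
    moreover have "((\<lambda>s. ?h s (\<pi>2 p) + ?k s (\<pi>1 p) - 1) has_real_derivative
        laplacian q (?h s) (\<pi>2 p) + laplacian q (?k s) (\<pi>1 p)) (at s)"
      using DERIV_diff[OF DERIV_add DERIV_const[of 1]] \<open>\<pi>1 p \<in> F\<close> \<open>\<pi>2 p \<in> F\<close>
        heat_fin_has_real_derivative[OF G F] by fastforce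
    hence "((\<lambda>s. d s p) has_real_derivative
        laplacian qt (?v s) p - (laplacian q (?h s) (\<pi>2 p) + laplacian q (?k s) (\<pi>1 p))) (at s)"
      unfolding d_def using \<open>p \<in> B\<close> by (intro DERIV_diff heat_fin_has_real_derivative[OF Gt box(1)])
    ultimately show "((\<lambda>s. d s p) has_real_derivative laplacian qt (d s) p) (at s)" by simp
  next
    fix p and s :: real assume "p \<notin> B" "0 \<le> s"
    moreover have "?h s y \<le> 1" "?k s y \<le> 1" for y
      using \<open>0 \<le> s\<close> by (intro heat_fin_le_1[OF G F] g; simp)+
    ultimately show "0 \<le> d s p"
      using box(2) by (auto simp: d_def heat_fin_outside heat_fin_nonneg[OF Gt box(1)] g)
  qed (use p box(2) in \<open>auto simp: d_def heat_fin_at_0\<close>)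
  thus ?thesis by (simp add: d_def)
qed

lemma heat_coupling_lower_bound:
  fixes q :: "'v::countable \<Rightarrow> 'v \<Rightarrow> real" and qt :: "'p::countable \<Rightarrow> 'p \<Rightarrow> real"
  assumes C: "coupling_projections q qt \<pi>1 \<pi>2" and G: "is_graph q" and sc: "stoch_complete q"
    and t: "0 \<le> t" and g: "\<And>y. 0 \<le> g y" "\<And>y. g y \<le> 1"
  shows "heat q t g (\<pi>2 p) \<le> heat qt t (\<lambda>p. g (\<pi>2 p)) p"
proof -
  have Gt: "is_graph qt" and inj: "inj (\<lambda>p. (\<pi>1 p, \<pi>2 p))"
    using C by (auto simp: coupling_projections_def)
  obtain E :: "nat \<Rightarrow> 'v set" where "exhaustion E" using exhaustion_exists by blast
  define F where "F i = E i \<union> {\<pi>1 p, \<pi>2 p}" for i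
  have F: "exhaustion F" unfolding F_def by (rule exhaustion_Un_finite) (use \<open>exhaustion E\<close> in simp_all)
  have bound: "heat_fin q (F i) t g (\<pi>2 p) + heat_fin q (F i) t (\<lambda>_. 1) (\<pi>1 p) - 1
      \<le> heat qt t (\<lambda>p. g (\<pi>2 p)) p" for i
  proof -
    have "finite (F i)" using F by (simp add: exhaustion_def)
    define B where "B = {p. \<pi>1 p \<in> F i \<and> \<pi>2 p \<in> F i}"
    have "finite B"
      unfolding B_def using finite_vimageI[OF finite_cartesian_product[OF \<open>finite (F i)\<close> \<open>finite (F i)\<close>] inj]
      by (simp add: vimage_def)
    have "heat_fin q (F i) t g (\<pi>2 p) + heat_fin q (F i) t (\<lambda>_. 1) (\<pi>1 p) - 1
        \<le> heat_fin qt B t (\<lambda>p. g (\<pi>2 p)) p"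
      by (rule heat_fin_coupling_lower_bound[OF C G \<open>finite (F i)\<close> \<open>finite B\<close> B_def _ t g])
        (simp add: B_def F_def)
    also have "\<dots> \<le> heat qt t (\<lambda>p. g (\<pi>2 p)) p"
      by (rule heat_fin_le_heat[OF Gt \<open>finite B\<close> t]) (simp_all add: g)
    finally show ?thesis .
  qed
  have "(\<lambda>i. heat_fin q (F i) t g (\<pi>2 p) + heat_fin q (F i) t (\<lambda>_. 1) (\<pi>1 p) - 1)
      \<longlonglongrightarrow> heat q t g (\<pi>2 p) + heat q t (\<lambda>_. 1) (\<pi>1 p) - 1"
    by (intro tendsto_intros tendsto_heat_fin_unit[OF G t _ _ F] g) simp_all
  hence "heat q t g (\<pi>2 p) + heat q t (\<lambda>_. 1) (\<pi>1 p) - 1 \<le> heat qt t (\<lambda>p. g (\<pi>2 p)) p"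
    by (rule LIMSEQ_le_const2) (use bound in blast)
  thus ?thesis using sc t by (simp add: stoch_complete_def)
qed

lemma coupled_heat_marginal_unit:
  fixes q :: "'v::countable \<Rightarrow> 'v \<Rightarrow> real" and qt :: "'p::countable \<Rightarrow> 'p \<Rightarrow> real"
  assumes C: "coupling_projections q qt \<pi>1 \<pi>2" and G: "is_graph q" and sc: "stoch_complete q"
    and t: "0 \<le> t" and g: "\<And>y. 0 \<le> g y" "\<And>y. g y \<le> 1"
  shows "heat qt t (\<lambda>p. g (\<pi>2 p)) p = heat q t g (\<pi>2 p)"
proof -
  have Gt: "is_graph qt" using C by (simp add: coupling_projections_def)
  let ?g' = "\<lambda>y. 1 - g y"
  have g_bounded: "bounded_fun g" using g by (auto intro: bounded_fun_unit)
  have "heat q t g (\<pi>2 p) \<le> heat qt t (\<lambda>p. g (\<pi>2 p)) p"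
    by (rule heat_coupling_lower_bound[OF C G sc t g])
  moreover have "1 - heat q t g (\<pi>2 p) \<le> heat qt t (\<lambda>p. ?g' (\<pi>2 p)) p"
  proof -
    have "heat q t (\<lambda>y. 1 * 1 + (- 1) * g y) (\<pi>2 p) = 1 * heat q t (\<lambda>_. 1) (\<pi>2 p) + (- 1) * heat q t g (\<pi>2 p)"
      by (rule heat_lincomb[OF G t bounded_fun_unit g_bounded]) simp_all
    hence "heat q t ?g' (\<pi>2 p) = 1 - heat q t g (\<pi>2 p)" using sc t by (simp add: stoch_complete_def)
    moreover have "heat q t ?g' (\<pi>2 p) \<le> heat qt t (\<lambda>p. ?g' (\<pi>2 p)) p"
      by (rule heat_coupling_lower_bound[OF C G sc t]) (simp_all add: g)
    ultimately show ?thesis by simp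
  qed
  moreover have "heat qt t (\<lambda>p. g (\<pi>2 p)) p + heat qt t (\<lambda>p. ?g' (\<pi>2 p)) p \<le> 1"
  proof -
    have "heat qt t (\<lambda>p. 1 * g (\<pi>2 p) + 1 * ?g' (\<pi>2 p)) p
        = 1 * heat qt t (\<lambda>p. g (\<pi>2 p)) p + 1 * heat qt t (\<lambda>p. ?g' (\<pi>2 p)) p"
      by (rule heat_lincomb[OF Gt t]) (use g in \<open>auto intro: bounded_fun_unit\<close>)
    moreover have "heat qt t (\<lambda>p. 1 * g (\<pi>2 p) + 1 * ?g' (\<pi>2 p)) p \<le> 1"
      by (rule heat_le_1[OF Gt t]) simp_all
    ultimately show ?thesis by simp
  qed
  ultimately show ?thesis by linarith
qed

lemma coupled_heat_marginal:
  fixes q :: "'v::countable \<Rightarrow> 'v \<Rightarrow> real" and qt :: "'p::countable \<Rightarrow> 'p \<Rightarrow> real"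
  assumes C: "coupling_projections q qt \<pi>1 \<pi>2" and G: "is_graph q" and sc: "stoch_complete q"
    and t: "0 \<le> t" and f: "bounded_fun f"
  shows "heat qt t (\<lambda>p. f (\<pi>2 p)) p = heat q t f (\<pi>2 p)"
proof -
  have Gt: "is_graph qt" using C by (simp add: coupling_projections_def)
  obtain g a b where g: "\<And>y. 0 \<le> g y" "\<And>y. g y \<le> 1" and f_eq: "f = (\<lambda>y. a * g y + b * 1)"
    using bounded_fun_unit_rescale[OF f] by blast
  have "bounded_fun g" "bounded_fun (\<lambda>p. g (\<pi>2 p))" "bounded_fun (\<lambda>_. 1)"
    using g by (auto intro: bounded_fun_unit)
  hence "heat qt t (\<lambda>p. f (\<pi>2 p)) p
      = a * heat qt t (\<lambda>p. g (\<pi>2 p)) p + b * heat qt t (\<lambda>p. 1) p"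
    unfolding f_eq by (intro heat_lincomb[OF Gt t])
  also have "\<dots> = a * heat q t g (\<pi>2 p) + b * heat q t (\<lambda>_. 1) (\<pi>2 p)"
    using coupled_heat_marginal_unit[OF C G sc t, of g] coupled_heat_marginal_unit[OF C G sc t, of "\<lambda>_. 1"] g
    by simp
  also have "\<dots> = heat q t f (\<pi>2 p)"
    unfolding f_eq using \<open>bounded_fun g\<close> \<open>bounded_fun (\<lambda>_. 1)\<close> by (intro heat_lincomb[OF G t, symmetric])
  finally show ?thesis .
qed

theorem mainTheorem5:
  fixes q :: "'v::countable \<Rightarrow> 'v \<Rightarrow> real"
    and qt :: "'v \<times> 'v \<Rightarrow> 'v \<times> 'v \<Rightarrow> real"
    and f :: "'v \<Rightarrow> real" and t :: real
  assumes "is_graph q" and "reversible q" and "stoch_complete q"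
    and "coupling_graph q qt"
    and "bounded_fun f" and "0 \<le> t"
  shows "heat qt t (\<lambda>(x, y). f y) = (\<lambda>(x, y). heat q t f y) \<and>
         heat qt t (\<lambda>(x, y). f x) = (\<lambda>(x, y). heat q t f x)"
proof -
  note marginal = coupled_heat_marginal[OF _ assms(1,3,6,5)]
  have "heat qt t (\<lambda>p. f (snd p)) p = heat q t f (snd p)"
    and "heat qt t (\<lambda>p. f (fst p)) p = heat q t f (fst p)" for p
    using marginal[OF coupling_graph_projections(1)[OF assms(4)]]
      marginal[OF coupling_graph_projections(2)[OF assms(4)]] by auto
  thus ?thesis by (auto simp: case_prod_beta' fun_eq_iff)
qed

end
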